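(* Let $n\ge 1$ and $x,y\in S_n$. Then there exist an integer $N$ with $n\leq N\leq n(n+1)/2$ and permutations $v,w\in S_N$ such that $P(v)=P(w)$, $v(i)=w(i)$ for all $i\leq N-n$, and the pattern of $v$ in the last $n$ positions is $x$ and the pattern of $w$ in the last $n$ positions is $y$.
   Context: Permutations are written in one-line notation. $P(w)$ denotes the Robinson--Schensted insertion tableau of $w\in S_N$, obtained by successively column inserting $w(N),w(N-1),\dots,w(1)$ into the empty tableau (column insertion of $a$: place $a$ in the first column, bumping the smallest entry of that column larger than $a$, if any, which is then inserted into the next column in the same way, and so on). For $x\in S_n$ and $v\in S_N$, the pattern of $v$ in the last $n$ positions is $x$ if for all $1\le i<j\le n$: $v(N-n+i)<v(N-n+j)$ if and only if $x(i)<x(j)$. *)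

theory Defs
  imports Main
begin

text \<open>Permutations of S_N in one-line notation, as lists: the list w represents the
  permutation i \<mapsto> w ! (i - 1) for 1 \<le> i \<le> N.\<close>
definition Sym :: "nat \<Rightarrow> nat list set" where
  "Sym N = {w. length w = N \<and> distinct w \<and> set w = {1..N}}"

text \<open>Tableaux as lists of columns (each column listed top to bottom).\<close>
fun col_insert :: "nat list list \<Rightarrow> nat \<Rightarrow> nat list list" where
  "col_insert [] a = [[a]]"
| "col_insert (c # cs) a =
     (if \<exists>z\<in>set c. a < z
      then (let b = Min {z \<in> set c. a < z}
            in map (\<lambda>z. if z = b then a else z) c # col_insert cs b)
      else (c @ [a]) # cs)"

definition P_tab :: "nat list \<Rightarrow> nat list list" where
  "P_tab w = foldl col_insert [] (rev w)"

definition last_pattern :: "nat \<Rightarrow> nat list \<Rightarrow> nat list \<Rightarrow> bool" where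
  "last_pattern n v x \<longleftrightarrow>
     (\<forall>i j. i < j \<and> j < n \<longrightarrow>
        (v ! (length v - n + i) < v ! (length v - n + j) \<longleftrightarrow> x ! i < x ! j))"

end

theory Submission
  imports Defs
begin

(* Take N = tri n = n(n+1)/2 and v = u @ map tri x, w = u @ map tri y, where u lists the
   non-triangular numbers of {1..N} in increasing blocks, the block between tri (n-1) and
   tri n first.  Then P(v) and P(w) are both the staircase tableau whose d-th antidiagonal
   holds tri d + 1, ..., tri (d+1), because P(u @ s) is that staircase for every arrangement
   s of tri 1, ..., tri n.  Removing the largest letter tri n
   from s leaves the staircase of size n - 1, and tri n itself, being larger than every other
   letter, only ever sits at the bottom of some column.  The leading block lies between the
   entries of that staircase and tri n and is inserted largest first: each new letter pushes
   the previous ones one column to the right, so the block fills the next antidiagonal and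
   tri n is pushed into a new last column. *)

lemma col_insert_Cons_bump:
  assumes "b \<in> set c" "a < b" "\<forall>z\<in>set c. a < z \<longrightarrow> b \<le> z"
  shows "col_insert (c # cs) a = map (\<lambda>z. if z = b then a else z) c # col_insert cs b"
proof -
  have "Min {z \<in> set c. a < z} = b"
    using assms by (intro Min_eqI) auto
  then show ?thesis
    using assms by (auto simp: Let_def)
qed

lemma col_insert_Cons_bumpE:
  assumes "\<exists>z\<in>set c. a < z"
  obtains b where "b \<in> set c" "a < b" "\<forall>z\<in>set c. a < z \<longrightarrow> b \<le> z"
    "col_insert (c # cs) a = map (\<lambda>z. if z = b then a else z) c # col_insert cs b"
proof -
  let ?b = "Min {z \<in> set c. a < z}"
  have "?b \<in> {z \<in> set c. a < z}"
    using assms by (intro Min_in) auto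
  moreover have "\<forall>z\<in>set c. a < z \<longrightarrow> ?b \<le> z"
    by simp
  ultimately show thesis
    using that col_insert_Cons_bump by blast
qed

lemma col_insert_bottom_bump:
  assumes "\<forall>z\<in>set c. z \<le> a" "a < b"
  shows "col_insert ((c @ [b]) # cs) a = (c @ [a]) # col_insert cs b"
proof -
  have "col_insert ((c @ [b]) # cs) a = map (\<lambda>z. if z = b then a else z) (c @ [b]) # col_insert cs b"
    using assms by (intro col_insert_Cons_bump) auto
  moreover have "map (\<lambda>z. if z = b then a else z) c = c"
    using assms by (intro map_idI) auto
  ultimately show ?thesis
    by simp
qed

lemma set_concat_col_insert: "set (concat (col_insert T a)) = insert a (set (concat T))"
proof (induction T arbitrary: a)
  case (Cons c cs)
  show ?case
  proof (cases "\<exists>z\<in>set c. a < z")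
    case True
    then obtain b where "b \<in> set c"
      and "col_insert (c # cs) a = map (\<lambda>z. if z = b then a else z) c # col_insert cs b"
      by (rule col_insert_Cons_bumpE)
    then show ?thesis
      using Cons.IH[of b] by auto
  qed auto
qed simp

fun snoc_column :: "nat \<Rightarrow> nat \<Rightarrow> nat list list \<Rightarrow> nat list list" where
  "snoc_column k m [] = [[m]]"
| "snoc_column 0 m (c # cs) = (c @ [m]) # cs"
| "snoc_column (Suc k) m (c # cs) = c # snoc_column k m cs"

lemma col_insert_greatest:
  assumes "\<forall>z\<in>set (concat T). z < m"
  shows "col_insert T m = snoc_column 0 m T"
proof (cases T)
  case (Cons c cs)
  then have "\<forall>z\<in>set c. z < m"
    using assms by simp
  then have "\<not> (\<exists>z\<in>set c. m < z)"
    by auto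
  then show ?thesis
    using Cons by simp
qed simp

lemma col_insert_snoc_column_no_bump:
  assumes "\<forall>z\<in>set c. z \<le> a" "a < m" "\<forall>z\<in>set (concat cs). z < m"
  shows "col_insert (snoc_column k m (c # cs)) a = (c @ [a]) # snoc_column (k - 1) m cs"
proof (cases k)
  case 0
  have "col_insert ((c @ [m]) # cs) a = (c @ [a]) # col_insert cs m"
    using assms by (intro col_insert_bottom_bump) auto
  then show ?thesis
    using 0 assms(3) by (simp add: col_insert_greatest)
next
  case (Suc j)
  then show ?thesis
    using assms by auto
qed

lemma col_insert_snoc_column:
  assumes "\<forall>z\<in>set (concat T). z < m" "a < m"
  shows "\<exists>k'. col_insert (snoc_column k m T) a = snoc_column k' m (col_insert T a)"
  using assms
proof (induction T arbitrary: k a)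
  case Nil
  then show ?case
    using col_insert_snoc_column_no_bump[of "[]" a m "[]" 0] by (intro exI[of _ 1]) simp
next
  case (Cons c cs)
  show ?case
  proof (cases "\<exists>z\<in>set c. a < z")
    case True
    then obtain b where b: "b \<in> set c" "a < b" "\<forall>z\<in>set c. a < z \<longrightarrow> b \<le> z"
      and bump: "col_insert (c # cs) a = map (\<lambda>z. if z = b then a else z) c # col_insert cs b"
      by (rule col_insert_Cons_bumpE)
    let ?c' = "map (\<lambda>z. if z = b then a else z) c"
    have "b < m"
      using Cons.prems b(1) by auto
    show ?thesis
    proof (cases k)
      case 0
      have "col_insert ((c @ [m]) # cs) a
          = map (\<lambda>z. if z = b then a else z) (c @ [m]) # col_insert cs b"
        using b \<open>b < m\<close> by (intro col_insert_Cons_bump) auto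
      then show ?thesis
        using 0 bump \<open>b < m\<close> by (intro exI[of _ 0]) simp
    next
      case (Suc j)
      obtain k' where k': "col_insert (snoc_column j m cs) b = snoc_column k' m (col_insert cs b)"
        using Cons.IH[of b j] Cons.prems \<open>b < m\<close> by auto
      have "col_insert (snoc_column k m (c # cs)) a = ?c' # col_insert (snoc_column j m cs) b"
        unfolding Suc snoc_column.simps by (rule col_insert_Cons_bump[OF b])
      also have "\<dots> = snoc_column (Suc k') m (col_insert (c # cs) a)"
        unfolding k' bump by simp
      finally show ?thesis
        by blast
    qed
  next
    case False
    then have "col_insert (snoc_column k m (c # cs)) a = (c @ [a]) # snoc_column (k - 1) m cs"
      using Cons.prems by (intro col_insert_snoc_column_no_bump) auto
    then show ?thesis
      using False by (intro exI[of _ "Suc (k - 1)"]) auto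
  qed
qed

lemma foldl_col_insert_snoc_column:
  assumes "\<forall>z\<in>set (concat T). z < m" "\<forall>a\<in>set as. a < m"
  shows "\<exists>k'. foldl col_insert (snoc_column k m T) as = snoc_column k' m (foldl col_insert T as)"
  using assms
proof (induction as arbitrary: T k)
  case (Cons a as)
  obtain k' where "col_insert (snoc_column k m T) a = snoc_column k' m (col_insert T a)"
    using col_insert_snoc_column Cons.prems by force
  moreover have "\<forall>z\<in>set (concat (col_insert T a)). z < m"
    using Cons.prems by (simp only: set_concat_col_insert) simp
  ultimately show ?case
    using Cons.IH[of "col_insert T a" k'] Cons.prems by auto
qed auto

abbreviation extend_cols :: "nat list list \<Rightarrow> nat list \<Rightarrow> nat list list" where
  "extend_cols G bs \<equiv> map2 (\<lambda>g b. g @ [b]) G bs"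

lemma set_concat_extend_cols:
  "length G = length bs \<Longrightarrow> set (concat (extend_cols G bs)) = set (concat G) \<union> set bs"
  by (induction G bs rule: list_induct2) (simp_all add: Un_ac)

lemma extend_cols_take:
  "length bs \<le> n \<Longrightarrow> extend_cols (take n G) bs = extend_cols G bs"
proof -
  assume "length bs \<le> n"
  then have "zip (take n G) bs = take n (zip G bs)"
    by (simp add: take_zip)
  also have "\<dots> = zip G bs"
    using \<open>length bs \<le> n\<close> by simp
  finally show ?thesis
    by simp
qed

lemma col_insert_extend_cols:
  assumes "length gs = length es" "sorted_wrt (<) (a # es)" "\<forall>e\<in>set (a # es). e < m"
    "\<forall>z\<in>set (concat (gs @ g # rest)). z < a"
  shows "col_insert (extend_cols gs es @ snoc_column k m (g # rest)) a
       = extend_cols (gs @ [g]) (a # es) @ snoc_column (k - 1) m rest"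
  using assms
proof (induction gs arbitrary: es a)
  case Nil
  have "\<forall>z\<in>set g. z \<le> a" "\<forall>z\<in>set (concat rest). z < m"
    using Nil.prems(3,4) by (auto intro: less_imp_le less_trans)
  then have "col_insert (snoc_column k m (g # rest)) a = (g @ [a]) # snoc_column (k - 1) m rest"
    using Nil.prems(3) by (intro col_insert_snoc_column_no_bump) auto
  then show ?case
    using Nil.prems(1) by simp
next
  case (Cons h gs)
  obtain e es' where es: "es = e # es'"
    using Cons.prems(1) by (cases es) auto
  let ?R = "snoc_column k m (g # rest)"
  have "a < e"
    using Cons.prems(2) es by simp
  have "extend_cols (h # gs) es @ ?R = (h @ [e]) # (extend_cols gs es' @ ?R)"
    using es by simp
  moreover have "col_insert ((h @ [e]) # (extend_cols gs es' @ ?R)) a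
      = (h @ [a]) # col_insert (extend_cols gs es' @ ?R) e"
    using Cons.prems(4) \<open>a < e\<close> by (intro col_insert_bottom_bump) (simp_all add: less_imp_le)
  moreover have "col_insert (extend_cols gs es' @ ?R) e
      = extend_cols (gs @ [g]) (e # es') @ snoc_column (k - 1) m rest"
  proof (rule Cons.IH)
    show "\<forall>z\<in>set (concat (gs @ g # rest)). z < e"
      using Cons.prems(4) \<open>a < e\<close> by (auto intro: less_trans)
  qed (use Cons.prems es in auto)
  ultimately show ?case
    using es by simp
qed

lemma foldl_col_insert_block:
  assumes "length bs \<le> length G" "sorted_wrt (<) bs" "\<forall>b\<in>set bs. b < m"
    "\<forall>z\<in>set (concat G). \<forall>b\<in>set bs. z < b"
  shows "foldl col_insert (snoc_column k m G) (rev bs)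
       = extend_cols G bs @ snoc_column (k - length bs) m (drop (length bs) G)"
  using assms
proof (induction bs)
  case (Cons b bs)
  let ?t = "length bs"
  have G: "drop ?t G = G ! ?t # drop (Suc ?t) G"
    using Cons.prems(1) by (simp add: Cons_nth_drop_Suc)
  have "foldl col_insert (snoc_column k m G) (rev (b # bs))
      = col_insert (extend_cols (take ?t G) bs @ snoc_column (k - ?t) m (G ! ?t # drop (Suc ?t) G)) b"
    using Cons by (simp add: extend_cols_take G)
  also have "\<dots> = extend_cols (take ?t G @ [G ! ?t]) (b # bs) @ snoc_column (k - ?t - 1) m (drop (Suc ?t) G)"
  proof (rule col_insert_extend_cols)
    have "set (concat (take ?t G @ G ! ?t # drop (Suc ?t) G)) = set (concat G)"
      using G by (metis append_take_drop_id)
    then show "\<forall>z\<in>set (concat (take ?t G @ G ! ?t # drop (Suc ?t) G)). z < b"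
      using Cons.prems(4) by simp
  qed (use Cons.prems in auto)
  also have "take ?t G @ [G ! ?t] = take (length (b # bs)) G"
    using Cons.prems(1) by (simp add: take_Suc_conv_app_nth)
  finally show ?case
    by (simp add: extend_cols_take)
qed simp

lemma P_tab_append: "P_tab (u @ w) = foldl col_insert (P_tab w) (rev u)"
  by (simp add: P_tab_def)

lemma set_concat_P_tab: "set (concat (P_tab w)) = set w"
proof -
  have "set (concat (foldl col_insert T as)) = set (concat T) \<union> set as" for T as
    by (induction as arbitrary: T) (simp_all add: set_concat_col_insert del: set_concat)
  then show ?thesis
    by (simp add: P_tab_def)
qed

lemma P_tab_insert_greatest:
  assumes "\<forall>z\<in>set (u @ w). z < m"
  shows "\<exists>k. P_tab (u @ m # w) = snoc_column k m (P_tab (u @ w))"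
proof -
  have "P_tab (m # w) = col_insert (P_tab w) m"
    using P_tab_append[of "[m]" w] by simp
  also have "\<dots> = snoc_column 0 m (P_tab w)"
    using assms by (intro col_insert_greatest) (simp add: set_concat_P_tab del: set_concat)
  finally have "P_tab (u @ m # w) = foldl col_insert (snoc_column 0 m (P_tab w)) (rev u)"
    using P_tab_append[of u "m # w"] by simp
  moreover obtain k where "foldl col_insert (snoc_column 0 m (P_tab w)) (rev u)
      = snoc_column k m (foldl col_insert (P_tab w) (rev u))"
    using foldl_col_insert_snoc_column[of "P_tab w" m "rev u" 0] assms
    by (auto simp: set_concat_P_tab simp del: set_concat)
  ultimately show ?thesis
    by (auto simp: P_tab_append)
qed

fun tri :: "nat \<Rightarrow> nat" where
  "tri 0 = 0"
| "tri (Suc n) = tri n + Suc n"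

lemma strict_mono_tri: "strict_mono tri"
  by (simp add: strict_mono_Suc_iff)

lemma tri_less_iff [simp]: "tri i < tri j \<longleftrightarrow> i < j"
  using strict_mono_tri by (rule strict_mono_less)

lemma tri_le_iff [simp]: "tri i \<le> tri j \<longleftrightarrow> i \<le> j"
  using strict_mono_tri by (rule strict_mono_less_eq)

lemma inj_tri: "inj tri"
  using strict_mono_tri by (rule strict_mono_imp_inj_on)

lemma le_tri: "n \<le> tri n"
  by (induction n) auto

lemma double_tri: "2 * tri n = n * (n + 1)"
  by (induction n) auto

lemma tri_image_atLeastAtMost: "tri ` {1..n} = {1..tri n} \<inter> range tri"
proof (intro equalityI subsetI)
  fix z assume "z \<in> {1..tri n} \<inter> range tri"
  then obtain j where "z = tri j" "1 \<le> tri j" "j \<le> n"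
    by auto
  moreover have "j \<noteq> 0"
    using \<open>1 \<le> tri j\<close> by (cases j) auto
  ultimately show "z \<in> tri ` {1..n}"
    by auto
qed (use le_tri order_trans in fastforce)

fun nontri_word :: "nat \<Rightarrow> nat list" where
  "nontri_word 0 = []"
| "nontri_word (Suc n) = [Suc (tri n)..<tri (Suc n)] @ nontri_word n"

lemma length_nontri_word: "length (nontri_word n) + n = tri n"
  by (induction n) auto

lemma set_nontri_word: "set (nontri_word n) = {1..tri n} - range tri"
proof (induction n)
  case (Suc n)
  have gap: "z \<notin> range tri" if "tri n < z" "z < tri (Suc n)" for z
    using that by (auto simp del: tri.simps)
  have "{1..tri (Suc n)} - range tri = {tri n<..<tri (Suc n)} \<union> ({1..tri n} - range tri)"
  proof (intro equalityI subsetI)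
    fix z assume z: "z \<in> {1..tri (Suc n)} - range tri"
    then have "z \<noteq> tri (Suc n)"
      by (metis DiffD2 rangeI)
    with z show "z \<in> {tri n<..<tri (Suc n)} \<union> ({1..tri n} - range tri)"
      by auto
  qed (use gap in auto)
  then show ?case
    using Suc.IH by (simp add: atLeastSucLessThan_greaterThanLessThan del: tri.simps)
qed simp

lemma distinct_nontri_word: "distinct (nontri_word n)"
  by (induction n) (auto simp: set_nontri_word simp del: tri.simps)

fun staircase :: "nat \<Rightarrow> nat list list" where
  "staircase 0 = []"
| "staircase (Suc n) = extend_cols (staircase n) [Suc (tri n)..<tri (Suc n)] @ [[tri (Suc n)]]"

lemma length_staircase: "length (staircase n) = n"
  by (induction n) auto

lemma set_concat_staircase: "set (concat (staircase n)) = {1..tri n}"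
proof (induction n)
  case (Suc n)
  have len: "length (staircase n) = length [Suc (tri n)..<tri (Suc n)]"
    by (simp add: length_staircase)
  show ?case
    unfolding staircase.simps concat_append set_append set_concat_extend_cols[OF len]
    using Suc.IH by auto
qed simp

lemma distinct_split_at_member:
  assumes "distinct s" "set s = insert m A" "m \<notin> A"
  obtains s1 s2 where "s = s1 @ m # s2" "distinct (s1 @ s2)" "set (s1 @ s2) = A"
proof -
  obtain s1 s2 where s: "s = s1 @ m # s2"
    using assms(2) by (metis insertI1 split_list)
  then have "m \<notin> set (s1 @ s2)" "set s = insert m (set (s1 @ s2))" "distinct (s1 @ s2)"
    using assms(1) by auto
  then show thesis
    using that s assms(2,3) by (metis insert_ident)
qed

lemma P_tab_nontri_word_append:
  assumes "distinct s" "set s = tri ` {1..n}"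
  shows "P_tab (nontri_word n @ s) = staircase n"
  using assms
proof (induction n arbitrary: s)
  case 0
  then show ?case
    by (simp add: P_tab_def)
next
  case (Suc n)
  define m where "m = tri (Suc n)"
  let ?bs = "[Suc (tri n)..<m]"
  have "tri ` {1..Suc n} = insert m (tri ` {1..n})" "m \<notin> tri ` {1..n}"
    unfolding m_def by (auto simp: atLeastAtMostSuc_conv inj_eq[OF inj_tri] simp del: tri.simps)
  moreover have "m \<in> tri ` {1..Suc n}"
    unfolding m_def by (intro imageI) simp
  ultimately obtain s1 s2 where s: "s = s1 @ m # s2"
    and s12: "distinct (s1 @ s2)" "set (s1 @ s2) = tri ` {1..n}"
    using Suc.prems by (metis distinct_split_at_member)
  have "z < m" if "z \<le> tri n" for z
    using that by (simp add: m_def)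
  then have "\<forall>z\<in>set (nontri_word n @ s1 @ s2). z < m"
    using s12(2) by (auto simp: set_nontri_word)
  then obtain k where top: "P_tab (nontri_word n @ s) = snoc_column k m (staircase n)"
    using P_tab_insert_greatest[of "nontri_word n @ s1" s2 m] Suc.IH[OF s12] s by auto
  have "length ?bs = n"
    by (simp add: m_def)
  have "P_tab (nontri_word (Suc n) @ s) = foldl col_insert (snoc_column k m (staircase n)) (rev ?bs)"
    using top P_tab_append[of ?bs "nontri_word n @ s"] by (simp add: m_def)
  also have "\<dots> = extend_cols (staircase n) ?bs
      @ snoc_column (k - length ?bs) m (drop (length ?bs) (staircase n))"
    by (rule foldl_col_insert_block)
      (use \<open>length ?bs = n\<close> in \<open>auto simp: length_staircase set_concat_staircase simp del: set_concat\<close>)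
  also have "\<dots> = staircase (Suc n)"
    using \<open>length ?bs = n\<close> by (simp add: length_staircase m_def)
  finally show ?case .
qed

lemma last_pattern_append_map:
  assumes "strict_mono f" "length x = n"
  shows "last_pattern n (u @ map f x) x"
  unfolding last_pattern_def
proof (intro allI impI)
  fix i j assume "i < j \<and> j < n"
  then show "(u @ map f x) ! (length (u @ map f x) - n + i) < (u @ map f x) ! (length (u @ map f x) - n + j)
      \<longleftrightarrow> x ! i < x ! j"
    using assms by (simp add: nth_append strict_mono_less)
qed

lemma map_tri_Sym:
  assumes "x \<in> Sym n"
  shows "distinct (map tri x)" "set (map tri x) = tri ` {1..n}"
  using assms inj_on_subset[OF inj_tri subset_UNIV] by (auto simp: Sym_def distinct_map)

lemma nontri_word_append_Sym:
  assumes "x \<in> Sym n"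
  shows "nontri_word n @ map tri x \<in> Sym (tri n)"
proof -
  have "length (nontri_word n @ map tri x) = tri n"
    using assms length_nontri_word[of n] by (simp add: Sym_def)
  moreover have "set (nontri_word n) \<inter> set (map tri x) = {}"
    by (auto simp: set_nontri_word)
  moreover have "set (map tri x) = {1..tri n} \<inter> range tri"
    using map_tri_Sym(2)[OF assms] by (simp only: tri_image_atLeastAtMost)
  then have "set (nontri_word n) \<union> set (map tri x) = {1..tri n}"
    by (auto simp: set_nontri_word)
  ultimately show ?thesis
    using distinct_nontri_word map_tri_Sym(1)[OF assms] by (simp add: Sym_def)
qed

theorem proposition2p6:
  fixes n :: nat and x y :: "nat list"
  assumes "n \<ge> 1" and "x \<in> Sym n" and "y \<in> Sym n"
  shows "\<exists>N v w. n \<le> N \<and> 2 * N \<le> n * (n + 1) \<and> v \<in> Sym N \<and> w \<in> Sym N \<and>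
           P_tab v = P_tab w \<and> (\<forall>i < N - n. v ! i = w ! i) \<and>
           last_pattern n v x \<and> last_pattern n w y"
proof (intro exI conjI)
  let ?v = "nontri_word n @ map tri x" and ?w = "nontri_word n @ map tri y"
  show "n \<le> tri n" "2 * tri n \<le> n * (n + 1)"
    by (simp_all add: le_tri double_tri)
  show "?v \<in> Sym (tri n)" "?w \<in> Sym (tri n)"
    using assms(2,3) by (simp_all add: nontri_word_append_Sym)
  show "P_tab ?v = P_tab ?w"
    using P_tab_nontri_word_append[OF map_tri_Sym[OF assms(2)]]
      P_tab_nontri_word_append[OF map_tri_Sym[OF assms(3)]] by simp
  have "length (nontri_word n) = tri n - n"
    using length_nontri_word[of n] by simp
  then show "\<forall>i < tri n - n. ?v ! i = ?w ! i"
    by (simp add: nth_append)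
  show "last_pattern n ?v x" "last_pattern n ?w y"
    using assms(2,3) strict_mono_tri by (simp_all add: last_pattern_append_map Sym_def)
qed

end
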